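(* Let $c,n\in\mathbb N$ with $c\ge2$, $n\ge2$, and let $s\in(0,1/2]$. For any real $\gamma\ge 2-(n-1)(2s-1)$, \[\sum_{\substack{(a_1,\ldots,a_n)\in\mathbb N^n\\ c\le a_1<a_2<\cdots<a_n}}\frac{1}{(a_1\cdots a_{n-1})^{2s}a_n^{\gamma}}\le\frac{1}{(c-1)^{\gamma+n(2s-1)-2s}}.\] *)

theory Defs
  imports "HOL-Analysis.Analysis"
begin

definition incr_tuples :: "nat \<Rightarrow> nat \<Rightarrow> nat list set" where
  "incr_tuples n c = {as. length as = n \<and> sorted_wrt (<) as \<and> c \<le> hd as}"

definition lemma_term :: "real \<Rightarrow> real \<Rightarrow> nat list \<Rightarrow> real" where
  "lemma_term s \<gamma> as =
     1 / ((prod_list (map real (butlast as))) powr (2 * s) * (real (last as)) powr \<gamma>)"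

end

theory Submission
  imports Defs
begin

text \<open>Induction on \<open>n\<close>, splitting off the first entry \<open>a\<^sub>1 = a\<close>: the rest is an increasing
  \<open>(n - 1)\<close>-tuple starting at \<open>a + 1\<close>, so by induction it contributes at most
  \<open>1 / a powr (\<gamma> + (n - 1)(2s - 1) - 2s)\<close>. With the factor \<open>1 / a powr 2s\<close> this leaves the
  one-variable sum of \<open>1 / a powr e\<close> over \<open>a \<ge> c\<close>, with \<open>e = \<gamma> + (n - 1)(2s - 1) \<ge> 2\<close>, which
  telescopes because \<open>1 / x powr e \<le> 1 / (x - 1) powr (e - 1) - 1 / x powr (e - 1)\<close>.
  Since \<open>2s - 1 \<le> 0\<close>, the hypothesis on \<open>\<gamma>\<close> only gets weaker as \<open>n\<close> decreases.\<close>

lemma inverse_powr_le_diff_inverse_powr: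
  fixes x e :: real
  assumes "x > 1" and "e \<ge> 2"
  shows "1 / x powr e \<le> 1 / (x - 1) powr (e - 1) - 1 / x powr (e - 1)"
proof -
  define r where "r = (x / (x - 1)) powr (e - 1)"
  have "x / (x - 1) \<ge> 1"
    using assms(1) by simp
  then have "r \<ge> x / (x - 1)"
    unfolding r_def using powr_mono[of 1 "e - 1" "x / (x - 1)"] assms by simp
  moreover have "x / (x - 1) = 1 + 1 / (x - 1)"
    using assms(1) by (simp add: field_simps)
  moreover have "1 / (x - 1) \<ge> 1 / x"
    using assms(1) by (simp add: frac_le)
  ultimately have "1 / x \<le> r - 1"
    by linarith
  then have "(1 / x) / x powr (e - 1) \<le> (r - 1) / x powr (e - 1)"
    by (intro divide_right_mono) auto
  moreover have "1 / (x - 1) powr (e - 1) = r / x powr (e - 1)"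
    unfolding r_def using assms(1) by (simp add: powr_divide)
  moreover have "1 / x powr e = (1 / x) / x powr (e - 1)"
    using assms(1) by (simp add: powr_diff)
  ultimately show ?thesis
    by (simp add: diff_divide_distrib)
qed

lemma sum_inverse_powr_atLeastLessThan_le:
  fixes c k :: nat and e :: real
  assumes "c \<ge> 2" and "e \<ge> 2"
  shows "(\<Sum>a\<in>{c..<c + k}. 1 / real a powr e)
    \<le> 1 / (real c - 1) powr (e - 1) - 1 / (real (c + k) - 1) powr (e - 1)"
proof (induction k)
  case 0
  then show ?case by simp
next
  case (Suc k)
  moreover have "1 / real (c + k) powr e
      \<le> 1 / (real (c + k) - 1) powr (e - 1) - 1 / real (c + k) powr (e - 1)"
    using inverse_powr_le_diff_inverse_powr[of "real (c + k)" e] assms by simp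
  ultimately show ?case by simp
qed

lemma sum_inverse_powr_le:
  fixes c :: nat and e :: real and A :: "nat set"
  assumes "c \<ge> 2" and "e \<ge> 2" and "finite A" and "A \<subseteq> {c..}"
  shows "(\<Sum>a\<in>A. 1 / real a powr e) \<le> 1 / (real c - 1) powr (e - 1)"
proof -
  obtain k where "A \<subseteq> {..<k}"
    using finite_nat_bounded[OF assms(3)] by blast
  then have "A \<subseteq> {c..<c + k}"
    using assms(4) by force
  then have "(\<Sum>a\<in>A. 1 / real a powr e) \<le> (\<Sum>a\<in>{c..<c + k}. 1 / real a powr e)"
    by (intro sum_mono2) auto
  also have "\<dots> \<le> 1 / (real c - 1) powr (e - 1) - 1 / (real (c + k) - 1) powr (e - 1)"
    using sum_inverse_powr_atLeastLessThan_le[OF assms(1,2)] .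
  also have "\<dots> \<le> 1 / (real c - 1) powr (e - 1)"
    by simp
  finally show ?thesis .
qed

lemma lemma_term_nonneg: "lemma_term s \<gamma> xs \<ge> 0"
  unfolding lemma_term_def by simp

lemma lemma_term_singleton: "lemma_term s \<gamma> [a] = 1 / real a powr \<gamma>"
  unfolding lemma_term_def by simp

lemma lemma_term_Cons:
  assumes "xs \<noteq> []"
  shows "lemma_term s \<gamma> (a # xs) = 1 / real a powr (2 * s) * lemma_term s \<gamma> xs"
  using assms unfolding lemma_term_def by (simp add: powr_mult prod_list_nonneg)

lemma incr_tuples_1: "incr_tuples 1 c = (\<lambda>a. [a]) ` {c..}"
  unfolding incr_tuples_def by (auto simp: length_Suc_conv)

lemma incr_tuples_Suc:
  assumes "n \<ge> 1"
  shows "xs \<in> incr_tuples (Suc n) c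
    \<longleftrightarrow> xs \<noteq> [] \<and> c \<le> hd xs \<and> tl xs \<in> incr_tuples n (Suc (hd xs))"
  using assms unfolding incr_tuples_def
  by (cases xs; cases "tl xs") (auto simp: Suc_le_eq)

lemma Nil_notin_incr_tuples:
  assumes "n \<ge> 1"
  shows "[] \<notin> incr_tuples n c"
  using assms by (simp add: incr_tuples_def)

lemma sum_by_hd:
  fixes f :: "'a list \<Rightarrow> 'b::comm_monoid_add"
  assumes "finite F" and "[] \<notin> F"
  shows "sum f F = (\<Sum>a\<in>hd ` F. \<Sum>xs\<in>tl ` {l \<in> F. hd l = a}. f (a # xs))"
proof -
  have "(\<lambda>l. a # tl l) ` {l \<in> F. hd l = a} = (\<lambda>l. l) ` {l \<in> F. hd l = a}" for a
    using assms(2) by (intro image_cong) (auto intro: list.collapse)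
  then have fiber: "{l \<in> F. hd l = a} = Cons a ` tl ` {l \<in> F. hd l = a}" for a
    by (simp add: image_image)
  have "sum f {l \<in> F. hd l = a} = (\<Sum>xs\<in>tl ` {l \<in> F. hd l = a}. f (a # xs))" for a
    by (rule sum.reindex_cong[OF _ fiber]) auto
  then show ?thesis
    using sum.image_gen[OF assms(1), of f hd] by simp
qed

lemma sum_lemma_term_le:
  fixes c n :: nat and s \<gamma> :: real
  assumes "n \<ge> 1" and "s \<le> 1/2" and "\<gamma> \<ge> 2 - (real n - 1) * (2 * s - 1)"
    and "c \<ge> 2" and "finite F" and "F \<subseteq> incr_tuples n c"
  shows "sum (lemma_term s \<gamma>) F \<le> 1 / (real c - 1) powr (\<gamma> + real n * (2 * s - 1) - 2 * s)"
  using assms(1,3-)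
proof (induction n arbitrary: c F rule: nat_induct_at_least)
  case base
  then have "F \<subseteq> (\<lambda>a. [a]) ` {c..}"
    using incr_tuples_1 by simp
  then obtain A where F: "F = (\<lambda>a. [a]) ` A" and A: "A \<subseteq> {c..}"
    by (auto simp: subset_image_iff)
  have "finite A"
    using \<open>finite F\<close> F by (simp add: finite_image_iff inj_on_def)
  have "sum (lemma_term s \<gamma>) F = (\<Sum>a\<in>A. 1 / real a powr \<gamma>)"
    unfolding F by (simp add: sum.reindex inj_on_def lemma_term_singleton)
  also have "\<dots> \<le> 1 / (real c - 1) powr (\<gamma> - 1)"
    using base \<open>finite A\<close> A by (intro sum_inverse_powr_le) auto
  finally show ?case by simp
next
  case (Suc n)
  define e where "e = \<gamma> + real n * (2 * s - 1)"
  define G where "G a = tl ` {l \<in> F. hd l = a}" for a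
  have "e \<ge> 2"
    using Suc.prems(1) unfolding e_def by simp
  have \<gamma>_n: "\<gamma> \<ge> 2 - (real n - 1) * (2 * s - 1)"
    using Suc.prems(1) assms(2) by (simp add: algebra_simps)
  have F: "l \<noteq> [] \<and> c \<le> hd l \<and> tl l \<in> incr_tuples n (Suc (hd l))" if "l \<in> F" for l
    using incr_tuples_Suc[OF Suc.hyps] that Suc.prems(4) by blast
  have G: "G a \<subseteq> incr_tuples n (Suc a)" and "finite (G a)" for a
    unfolding G_def using F Suc.prems(3) by auto
  have G_Cons: "(\<Sum>xs\<in>G a. lemma_term s \<gamma> (a # xs))
      = 1 / real a powr (2 * s) * sum (lemma_term s \<gamma>) (G a)" for a
    unfolding sum_distrib_left
    using G Nil_notin_incr_tuples[OF Suc.hyps] by (intro sum.cong refl lemma_term_Cons) blast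
  have "sum (lemma_term s \<gamma>) F = (\<Sum>a\<in>hd ` F. \<Sum>xs\<in>G a. lemma_term s \<gamma> (a # xs))"
    unfolding G_def using F Suc.prems(3) by (intro sum_by_hd) auto
  also have "\<dots> = (\<Sum>a\<in>hd ` F. 1 / real a powr (2 * s) * sum (lemma_term s \<gamma>) (G a))"
    by (simp add: G_Cons)
  also have "\<dots> \<le> (\<Sum>a\<in>hd ` F. 1 / real a powr (2 * s) * (1 / real a powr (e - 2 * s)))"
    using Suc.IH[OF \<gamma>_n _ \<open>finite (G _)\<close> G] Suc.prems(2)
    by (intro sum_mono mult_left_mono) (auto simp: e_def dest!: F)
  also have "\<dots> = (\<Sum>a\<in>hd ` F. 1 / real a powr e)"
    using F Suc.prems(2) by (intro sum.cong refl) (auto simp: powr_add[symmetric])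
  also have "\<dots> \<le> 1 / (real c - 1) powr (e - 1)"
    using F Suc.prems(2,3) \<open>e \<ge> 2\<close> by (intro sum_inverse_powr_le) auto
  finally show ?case
    unfolding e_def by (simp add: algebra_simps)
qed

theorem lemma2p3:
  fixes c n :: nat and s \<gamma> :: real
  assumes "c \<ge> 2" and "n \<ge> 2" and "0 < s" and "s \<le> 1/2"
    and "\<gamma> \<ge> 2 - (real n - 1) * (2 * s - 1)"
  shows "lemma_term s \<gamma> summable_on incr_tuples n c
       \<and> infsum (lemma_term s \<gamma>) (incr_tuples n c)
           \<le> 1 / (real c - 1) powr (\<gamma> + real n * (2 * s - 1) - 2 * s)"
proof -
  let ?bound = "1 / (real c - 1) powr (\<gamma> + real n * (2 * s - 1) - 2 * s)"
  have finite_sums: "sum (lemma_term s \<gamma>) F \<le> ?bound"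
    if "finite F" and "F \<subseteq> incr_tuples n c" for F
    using sum_lemma_term_le[of n s \<gamma> c F] assms that by simp
  then have "lemma_term s \<gamma> summable_on incr_tuples n c"
    by (intro nonneg_bdd_above_summable_on bdd_aboveI) (auto simp: lemma_term_nonneg)
  with finite_sums show ?thesis
    using infsum_le_finite_sums by blast
qed

end
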